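(* Let $\chi\geq 3$ and $m\geq 2$ be integers, let $T_\chi$ be any non-transitive tournament on $[\chi]$, and let $H=H(T_\chi,m)$. Let $n,t\geq 1$ be integers such that $\lfloor 3t/2\rfloor+1<n$. Then $R(P^{(3)}_{n,2},H)\geq (m-1)t+1$.
   Context: A tournament on $[\chi]$ is an orientation of the complete graph on $[\chi]$; it is transitive if acyclic. For a tournament $T_\chi$ on $[\chi]$ and $m\ge1$, $H(T_\chi,m)$ is the $3$-uniform hypergraph whose vertex set is partitioned into sets $A_1,\dots,A_\chi$ each of size $m$, with edge set $\{xyz: x,y\in A_i,\ z\in A_j,\ (i,j)\text{ an arc of }T_\chi\}$. $R(G,H)$ for 3-graphs is the least $N$ such that every red/blue colouring of the edges of $K^{(3)}_N$ contains a red copy of $G$ or a blue copy of $H$. The tight path $P^{(3)}_{n,2}$ has vertices $v_1,\dots,v_n$ and edges $\{v_i,v_{i+1},v_{i+2}\}$, $i\in[n-2]$. *)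

theory Defs
  imports Main
begin

text \<open>A 3-uniform hypergraph is given as a pair (V, E) of a vertex set and a set of
  edges, each edge being a 3-element subset of V.\<close>

type_synonym 'a hgraph = "'a set \<times> 'a set set"

text \<open>A red/blue colouring of the edges of the complete 3-graph on {0..<N} is a
  function col from sets to bool (True = red, False = blue); only its values on
  3-subsets of {0..<N} matter.\<close>

definition red_copy :: "(nat set \<Rightarrow> bool) \<Rightarrow> nat \<Rightarrow> 'a hgraph \<Rightarrow> bool" where
  "red_copy col N G \<longleftrightarrow> (\<exists>f. inj_on f (fst G) \<and> f ` fst G \<subseteq> {0..<N} \<and>
      (\<forall>e\<in>snd G. col (f ` e)))"

definition blue_copy :: "(nat set \<Rightarrow> bool) \<Rightarrow> nat \<Rightarrow> 'a hgraph \<Rightarrow> bool" where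
  "blue_copy col N G \<longleftrightarrow> (\<exists>f. inj_on f (fst G) \<and> f ` fst G \<subseteq> {0..<N} \<and>
      (\<forall>e\<in>snd G. \<not> col (f ` e)))"

definition ramsey3 :: "'a hgraph \<Rightarrow> 'b hgraph \<Rightarrow> nat" where
  "ramsey3 G H = (LEAST N. \<forall>col. red_copy col N G \<or> blue_copy col N H)"

definition tight_path :: "nat \<Rightarrow> nat hgraph" where
  "tight_path n = ({1..n}, {{i, i+1, i+2} | i. 1 \<le> i \<and> i + 2 \<le> n})"

definition tournament :: "nat \<Rightarrow> (nat \<times> nat) set \<Rightarrow> bool" where
  "tournament chi T \<longleftrightarrow> T \<subseteq> {1..chi} \<times> {1..chi} \<and>
     (\<forall>i\<in>{1..chi}. (i, i) \<notin> T) \<and>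
     (\<forall>i\<in>{1..chi}. \<forall>j\<in>{1..chi}. i \<noteq> j \<longrightarrow> ((i, j) \<in> T \<longleftrightarrow> (j, i) \<notin> T))"

definition transitive_tournament :: "nat \<Rightarrow> (nat \<times> nat) set \<Rightarrow> bool" where
  "transitive_tournament chi T \<longleftrightarrow> tournament chi T \<and> acyclic T"

definition HT :: "(nat \<times> nat) set \<Rightarrow> nat \<Rightarrow> nat \<Rightarrow> (nat \<times> nat) hgraph" where
  "HT T chi m = ({1..chi} \<times> {0..<m},
     {{x, y, z} | x y z i j. (i, j) \<in> T \<and> i \<in> {1..chi} \<and> j \<in> {1..chi} \<and>
        x \<in> {i} \<times> {0..<m} \<and> y \<in> {i} \<times> {0..<m} \<and> x \<noteq> y \<and> z \<in> {j} \<times> {0..<m}})"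

end

theory Submission
  imports Defs "HOL-Library.Ramsey"
begin

(* Cut {0..<(m-1)t} into m-1 blocks of t consecutive integers and colour a 3-set red iff
   its lowest block contains two of its elements.
   In a red tight path every window of three consecutive vertices has its lowest block hit
   twice. Propagating along the path, every window contains two vertices of the globally
   lowest block; hence at most t vertices lie in that block and the remaining ones are at
   least three apart, which forces n <= 3t/2 + 1.
   In a blue copy of H(T,m), by pigeonhole each class A_i has two vertices in a common
   block r(i), and the blue edges xyz with z in A_j force r(j) < r(i) for every arc (i,j),
   so T would be acyclic. *)

definition uniform_hgraph :: "nat \<Rightarrow> 'a hgraph \<Rightarrow> bool" where
  "uniform_hgraph r G \<longleftrightarrow> finite (fst G) \<and> (\<forall>e\<in>snd G. e \<subseteq> fst G \<and> card e = r)"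

lemma embed_into_homogeneous_set:
  fixes A :: "nat set"
  assumes G: "uniform_hgraph r G" and card_le: "card (fst G) \<le> card A"
    and A: "finite A" "A \<subseteq> {..<N}" and hom: "\<And>X. X \<in> [A]\<^bsup>r\<^esup> \<Longrightarrow> Q X"
  shows "\<exists>f. inj_on f (fst G) \<and> f ` fst G \<subseteq> {0..<N} \<and> (\<forall>e\<in>snd G. Q (f ` e))"
proof -
  have "finite (fst G)"
    using G unfolding uniform_hgraph_def by blast
  then obtain f where f: "f ` fst G \<subseteq> A" "inj_on f (fst G)"
    using card_le_inj[OF _ A(1) card_le] by blast
  have "Q (f ` e)" if "e \<in> snd G" for e
  proof -
    have e: "e \<subseteq> fst G" "card e = r"
      using G that unfolding uniform_hgraph_def by auto
    have "inj_on f e"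
      using f(2) e(1) by (rule inj_on_subset)
    then have "card (f ` e) = r"
      using e(2) by (simp add: card_image)
    moreover have "f ` e \<subseteq> A"
      using e(1) f(1) by blast
    moreover have "finite (f ` e)"
      using calculation(2) A(1) by (rule finite_subset)
    ultimately show ?thesis
      using hom unfolding nsets_def by blast
  qed
  moreover have "f ` fst G \<subseteq> {0..<N}"
    unfolding atLeast0LessThan using f(1) A(2) by blast
  ultimately show ?thesis
    using f(2) by blast
qed

lemma ramsey_copies_exist:
  assumes G: "uniform_hgraph r G" and H: "uniform_hgraph r H"
  shows "\<exists>N. \<forall>col. red_copy col N G \<or> blue_copy col N H"
proof -
  define k where "k = max (card (fst G)) (card (fst H))"
  obtain N :: nat where N: "partn_lst {..<N} [k, k] r"
    using ramsey_full by blast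
  have "red_copy col N G \<or> blue_copy col N H" for col
  proof -
    define c where "c X = (if col X then 0 else 1 :: nat)" for X
    have "c \<in> [{..<N}]\<^bsup>r\<^esup> \<rightarrow> {..<length [k, k]}"
      by (simp add: c_def)
    then obtain i A where i: "i < length [k, k]" "A \<in> [{..<N}]\<^bsup>([k, k] ! i)\<^esup>"
      and mono: "c ` [A]\<^bsup>r\<^esup> \<subseteq> {i}"
      using partn_lstE[OF N _ refl] by blast
    then have "[k, k] ! i = k"
      using less_Suc_eq by (auto simp: nth_Cons')
    then have A: "finite A" "card A = k" "A \<subseteq> {..<N}"
      using i(2) by (auto simp: nsets_def)
    show ?thesis
    proof (cases "i = 0")
      case True
      have "card (fst G) \<le> card A"
        using A(2) by (simp add: k_def)
      moreover have "col X" if "X \<in> [A]\<^bsup>r\<^esup>" for X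
        using True mono that by (auto simp: c_def split: if_splits)
      ultimately have "red_copy col N G"
        unfolding red_copy_def by (rule embed_into_homogeneous_set[OF G _ A(1,3)])
      then show ?thesis ..
    next
      case False
      have "card (fst H) \<le> card A"
        using A(2) by (simp add: k_def)
      moreover have "\<not> col X" if "X \<in> [A]\<^bsup>r\<^esup>" for X
        using False mono that by (auto simp: c_def split: if_splits)
      ultimately have "blue_copy col N H"
        unfolding blue_copy_def by (rule embed_into_homogeneous_set[OF H _ A(1,3)])
      then show ?thesis ..
    qed
  qed
  then show ?thesis
    by blast
qed

lemma red_copy_mono:
  assumes "red_copy col N G" "N \<le> N'"
  shows "red_copy col N' G"
proof -
  have "{0..<N} \<subseteq> {0..<N'}"
    using assms(2) by auto
  then show ?thesis
    using assms(1) unfolding red_copy_def by blast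
qed

lemma blue_copy_mono:
  assumes "blue_copy col N G" "N \<le> N'"
  shows "blue_copy col N' G"
proof -
  have "{0..<N} \<subseteq> {0..<N'}"
    using assms(2) by auto
  then show ?thesis
    using assms(1) unfolding blue_copy_def by blast
qed

text \<open>Since \<^const>\<open>ramsey3\<close> is a \<open>LEAST\<close>, a lower bound needs the existence of
  some good \<open>N\<close>, i.e. Ramsey's theorem.\<close>

lemma ramsey3_lower_bound:
  assumes "uniform_hgraph r G" "uniform_hgraph r H"
    and "\<not> red_copy col N G" "\<not> blue_copy col N H"
  shows "N < ramsey3 G H"
proof -
  let ?P = "\<lambda>N. \<forall>col. red_copy col N G \<or> blue_copy col N H"
  have "?P (ramsey3 G H)"
    unfolding ramsey3_def using ramsey_copies_exist[OF assms(1,2)] by (rule LeastI_ex)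
  then have "red_copy col (ramsey3 G H) G \<or> blue_copy col (ramsey3 G H) H"
    by blast
  then show ?thesis
    using assms(3,4) red_copy_mono blue_copy_mono not_less by blast
qed

lemma uniform_hgraph_tight_path: "uniform_hgraph 3 (tight_path n)"
  by (auto simp: uniform_hgraph_def tight_path_def)

lemma uniform_hgraph_HT:
  assumes "irrefl_on {1..chi} T"
  shows "uniform_hgraph 3 (HT T chi m)"
proof -
  have "e \<subseteq> fst (HT T chi m) \<and> card e = 3" if edge: "e \<in> snd (HT T chi m)" for e
  proof -
    obtain x y z i j where e: "e = {x, y, z}" "(i, j) \<in> T" "i \<in> {1..chi}" "j \<in> {1..chi}"
      "x \<in> {i} \<times> {0..<m}" "y \<in> {i} \<times> {0..<m}" "x \<noteq> y" "z \<in> {j} \<times> {0..<m}"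
      using edge unfolding HT_def snd_conv by blast
    moreover have "i \<noteq> j"
      using e(2,3) assms unfolding irrefl_on_def by blast
    ultimately show ?thesis
      by (auto simp: HT_def)
  qed
  moreover have "finite (fst (HT T chi m))"
    by (simp add: HT_def)
  ultimately show ?thesis
    unfolding uniform_hgraph_def by blast
qed

definition min_twice_on :: "('a \<Rightarrow> 'b::linorder) \<Rightarrow> 'a set \<Rightarrow> bool" where
  "min_twice_on b W \<longleftrightarrow> (\<exists>j\<in>W. \<exists>j'\<in>W. j \<noteq> j' \<and> b j = b j' \<and> (\<forall>l\<in>W. b j \<le> b l))"

lemma min_twice_on_image: "min_twice_on b (f ` W) \<Longrightarrow> min_twice_on (b \<circ> f) W"
  unfolding min_twice_on_def by (metis comp_apply image_iff)

definition block_colouring :: "nat \<Rightarrow> nat set \<Rightarrow> bool" where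
  "block_colouring t = min_twice_on (\<lambda>v. v div t)"

lemma windows_contain_global_min_twice:
  fixes b :: "nat \<Rightarrow> 'a::linorder"
  assumes windows: "\<And>i. 1 \<le> i \<Longrightarrow> i + 2 \<le> n \<Longrightarrow> min_twice_on b {i..i+2}"
    and window: "1 \<le> i" "i + 2 \<le> n"
  shows "\<exists>j\<in>{i..i+2}. \<exists>j'\<in>{i..i+2}. j \<noteq> j' \<and> b j = Min (b ` {1..n}) \<and> b j' = Min (b ` {1..n})"
proof -
  define a where "a = Min (b ` {1..n})"
  define hits where "hits i \<longleftrightarrow> (\<exists>j\<in>{i..i+2}. b j = a)" for i
  have hits_twice: "\<exists>j\<in>{i..i+2}. \<exists>j'\<in>{i..i+2}. j \<noteq> j' \<and> b j = a \<and> b j' = a"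
    if i: "1 \<le> i" "i + 2 \<le> n" and "hits i" for i
  proof -
    obtain j j' where jj: "j \<in> {i..i+2}" "j' \<in> {i..i+2}" "j \<noteq> j'" "b j = b j'"
      and least: "\<forall>l\<in>{i..i+2}. b j \<le> b l"
      using windows[OF i] unfolding min_twice_on_def by blast
    obtain q where "q \<in> {i..i+2}" "b q = a"
      using \<open>hits i\<close> unfolding hits_def by blast
    then have "b j \<le> a"
      using least by auto
    moreover have "a \<le> b j"
      using jj(1) i by (simp add: a_def)
    ultimately have "b j = a" "b j' = a"
      using jj(4) by auto
    then show ?thesis
      using jj(1-3) by blast
  qed
  txt \<open>Of two distinct positions in a window, one lies in the next window and one in the
    previous one.\<close>
  have hits_step: "hits i \<longleftrightarrow> hits (i + 1)" if i: "1 \<le> i" "i + 3 \<le> n" for i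
  proof
    assume "hits i"
    moreover have "i + 2 \<le> n"
      using i by simp
    ultimately obtain j j' where "j \<in> {i..i+2}" "j' \<in> {i..i+2}" "j \<noteq> j'" "b j = a" "b j' = a"
      using hits_twice i(1) by blast
    then have "j \<in> {i+1..i+1+2} \<and> b j = a \<or> j' \<in> {i+1..i+1+2} \<and> b j' = a"
      by auto
    then show "hits (i + 1)"
      unfolding hits_def by blast
  next
    assume "hits (i + 1)"
    moreover have "1 \<le> i + 1" "i + 1 + 2 \<le> n"
      using i by simp_all
    ultimately obtain j j' where "j \<in> {i+1..i+1+2}" "j' \<in> {i+1..i+1+2}" "j \<noteq> j'" "b j = a" "b j' = a"
      using hits_twice by blast
    then have "j \<in> {i..i+2} \<and> b j = a \<or> j' \<in> {i..i+2} \<and> b j' = a"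
      by auto
    then show "hits i"
      unfolding hits_def by blast
  qed
  have hits_shift: "hits i \<longleftrightarrow> hits (i + d)" if "1 \<le> i" "i + d + 2 \<le> n" for i d
    using that
  proof (induction d)
    case (Suc d)
    then show ?case
      using hits_step[of "i + d"] by simp
  qed simp
  have "3 \<le> n"
    using window by simp
  have "a \<in> b ` {1..n}"
    unfolding a_def using \<open>3 \<le> n\<close> by (intro Min_in) auto
  then obtain p where p: "p \<in> {1..n}" "b p = a"
    by blast
  define q where "q = min p (n - 2)"
  have q: "1 \<le> q" "q + 2 \<le> n" "hits q"
    using p \<open>3 \<le> n\<close> unfolding q_def hits_def by (auto intro!: bexI[of _ p])
  have "hits i"
  proof (cases "i \<le> q")
    case True
    then show ?thesis
      using hits_shift[of i "q - i"] q window(1) by simp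
  next
    case False
    then show ?thesis
      using hits_shift[of q "i - q"] q window(2) by simp
  qed
  then show ?thesis
    using hits_twice window unfolding a_def by blast
qed

lemma card_spaced_subset_le:
  fixes K :: "nat set"
  assumes "K \<subseteq> {1..n}"
    and spaced: "\<And>j j'. j \<in> K \<Longrightarrow> j' \<in> K \<Longrightarrow> j < j' \<Longrightarrow> j + d \<le> j'"
  shows "d * card K \<le> n + d - 1"
proof -
  define g where "g = (\<lambda>(k, r). k + r :: nat)"
  have "inj_on g (K \<times> {0..<d})"
  proof (rule inj_onI)
    fix p p' assume "p \<in> K \<times> {0..<d}" "p' \<in> K \<times> {0..<d}" "g p = g p'"
    moreover obtain k r k' r' where "p = (k, r)" "p' = (k', r')"
      by fastforce
    moreover have "k = k'"
      using calculation spaced[of k k'] spaced[of k' k] unfolding g_def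
      by (cases k k' rule: linorder_cases) auto
    ultimately show "p = p'"
      unfolding g_def by simp
  qed
  moreover have "g ` (K \<times> {0..<d}) \<subseteq> {1..<n + d}"
    using assms(1) unfolding g_def by auto
  ultimately have "card (K \<times> {0..<d}) \<le> card {1..<n + d}"
    using card_inj_on_le by blast
  then show ?thesis
    by (simp add: card_cartesian_product mult.commute)
qed

lemma card_off_min_le:
  fixes b :: "nat \<Rightarrow> 'a::linorder"
  assumes "3 \<le> n"
    and windows: "\<And>i. 1 \<le> i \<Longrightarrow> i + 2 \<le> n \<Longrightarrow> min_twice_on b {i..i+2}"
  shows "3 * card {j\<in>{1..n}. b j \<noteq> Min (b ` {1..n})} \<le> n + 2"
proof -
  define K where "K = {j\<in>{1..n}. b j \<noteq> Min (b ` {1..n})}"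
  have "j + 3 \<le> j'" if "j \<in> K" "j' \<in> K" "j < j'" for j j'
  proof (rule ccontr)
    assume "\<not> j + 3 \<le> j'"
    define i where "i = min j (n - 2)"
    have i: "1 \<le> i" "i + 2 \<le> n" "j \<in> {i..i+2}" "j' \<in> {i..i+2}"
      using that \<open>\<not> j + 3 \<le> j'\<close> assms(1) unfolding i_def K_def by auto
    obtain k k' where "k \<in> {i..i+2}" "k' \<in> {i..i+2}" "k \<noteq> k'"
      "b k = Min (b ` {1..n})" "b k' = Min (b ` {1..n})"
      using windows_contain_global_min_twice[OF windows i(1,2)] by blast
    moreover have "k \<noteq> j" "k \<noteq> j'" "k' \<noteq> j" "k' \<noteq> j'"
      using that calculation(4,5) unfolding K_def by auto
    ultimately show False
      using i(3,4) that(3) by auto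
  qed
  moreover have "K \<subseteq> {1..n}"
    unfolding K_def by blast
  ultimately show ?thesis
    using card_spaced_subset_le[of K n 3] unfolding K_def by simp
qed

lemma no_red_tight_path:
  assumes "0 < t" and "(3 * t) div 2 + 1 < n"
  shows "\<not> red_copy (block_colouring t) N (tight_path n)"
proof
  assume "red_copy (block_colouring t) N (tight_path n)"
  moreover have "fst (tight_path n) = {1..n}"
    by (simp add: tight_path_def)
  ultimately obtain f where inj: "inj_on f {1..n}"
    and red: "\<And>e. e \<in> snd (tight_path n) \<Longrightarrow> block_colouring t (f ` e)"
    unfolding red_copy_def by auto
  define b where "b = (\<lambda>v. v div t) \<circ> f"
  define a where "a = Min (b ` {1..n})"
  define S where "S = {j\<in>{1..n}. b j = a}"
  define K where "K = {j\<in>{1..n}. b j \<noteq> a}"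
  have windows: "min_twice_on b {i..i+2}" if "1 \<le> i" "i + 2 \<le> n" for i
  proof -
    have "{i..i+2} = {i, i+1, i+2}"
      by auto
    then have "{i..i+2} \<in> snd (tight_path n)"
      using that by (auto simp: tight_path_def)
    then have "block_colouring t (f ` {i..i+2})"
      by (rule red)
    then show ?thesis
      unfolding block_colouring_def b_def by (rule min_twice_on_image)
  qed
  have "3 \<le> n"
    using assms by linarith
  then have card_K: "3 * card K \<le> n + 2"
    unfolding K_def a_def using windows by (rule card_off_min_le)
  have "inj_on (\<lambda>j. f j mod t) S"
  proof (rule inj_onI)
    fix j j' assume "j \<in> S" "j' \<in> S" and mod_eq: "f j mod t = f j' mod t"
    then have "f j div t = f j' div t"
      unfolding S_def b_def by simp
    then have "f j = f j'"
      using mod_eq div_mult_mod_eq[of "f j" t] div_mult_mod_eq[of "f j'" t] by metis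
    then show "j = j'"
      using inj \<open>j \<in> S\<close> \<open>j' \<in> S\<close> unfolding S_def inj_on_def by blast
  qed
  moreover have "(\<lambda>j. f j mod t) ` S \<subseteq> {..<t}"
    using assms(1) by auto
  ultimately have card_S: "card S \<le> t"
    using card_inj_on_le[OF _ _ finite_lessThan] by fastforce
  have "S \<union> K = {1..n}" "S \<inter> K = {}"
    unfolding S_def K_def by auto
  then have "card S + card K = n"
    using card_Un_disjoint[of S K] by (simp add: S_def K_def)
  then show False
    using card_S card_K assms(2) by linarith
qed

lemma pigeonhole_div:
  fixes f :: "'a \<Rightarrow> nat"
  assumes "0 < t" "finite A" "k < card A" "f ` A \<subseteq> {..<k * t}"
  shows "\<exists>x\<in>A. \<exists>y\<in>A. x \<noteq> y \<and> f x div t = f y div t"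
proof -
  have "(\<lambda>x. f x div t) ` A \<subseteq> {..<k}"
    using assms(1,4) by (auto simp: div_less_iff_less_mult)
  then have "card ((\<lambda>x. f x div t) ` A) \<le> k"
    using card_mono[OF finite_lessThan] by fastforce
  then have "card ((\<lambda>x. f x div t) ` A) < card A"
    using assms(3) by simp
  then show ?thesis
    using pigeonhole unfolding inj_on_def by blast
qed

lemma acyclic_if_rank_decreasing:
  fixes r :: "'a \<Rightarrow> nat"
  assumes "\<And>i j. (i, j) \<in> T \<Longrightarrow> r j < r i"
  shows "acyclic T"
proof -
  have "T \<subseteq> (measure r)\<inverse>"
    using assms by auto
  then show ?thesis
    using acyclic_subset wf_acyclic[OF wf_measure] acyclic_converse by blast
qed

lemma blue_HT_copy_imp_acyclic:
  assumes "0 < t" "1 \<le> m" "T \<subseteq> {1..chi} \<times> {1..chi}"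
    and "blue_copy (block_colouring t) ((m - 1) * t) (HT T chi m)"
  shows "acyclic T"
proof -
  have "fst (HT T chi m) = {1..chi} \<times> {0..<m}"
    by (simp add: HT_def)
  then obtain f where inj: "inj_on f ({1..chi} \<times> {0..<m})"
    and range: "f ` ({1..chi} \<times> {0..<m}) \<subseteq> {0..<(m - 1) * t}"
    and blue: "\<And>e. e \<in> snd (HT T chi m) \<Longrightarrow> \<not> block_colouring t (f ` e)"
    using assms(4) unfolding blue_copy_def by auto
  have "\<forall>i\<in>{1..chi}. \<exists>c. \<exists>x\<in>{i} \<times> {0..<m}. \<exists>y\<in>{i} \<times> {0..<m}.
      x \<noteq> y \<and> f x div t = c \<and> f y div t = c"
  proof
    fix i assume "i \<in> {1..chi}"
    then have "f ` ({i} \<times> {0..<m}) \<subseteq> {..<(m - 1) * t}"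
      using range by (auto simp: image_subset_iff)
    then have "\<exists>x\<in>{i} \<times> {0..<m}. \<exists>y\<in>{i} \<times> {0..<m}. x \<noteq> y \<and> f x div t = f y div t"
      using pigeonhole_div[OF assms(1), of "{i} \<times> {0..<m}" "m - 1" f] assms(2)
      by (simp add: card_cartesian_product)
    then show "\<exists>c. \<exists>x\<in>{i} \<times> {0..<m}. \<exists>y\<in>{i} \<times> {0..<m}. x \<noteq> y \<and> f x div t = c \<and> f y div t = c"
      by blast
  qed
  from bchoice[OF this] obtain rank where rank: "\<forall>i\<in>{1..chi}. \<exists>x\<in>{i} \<times> {0..<m}.
      \<exists>y\<in>{i} \<times> {0..<m}. x \<noteq> y \<and> f x div t = rank i \<and> f y div t = rank i"
    by blast
  have "rank j < rank i" if arc: "(i, j) \<in> T" for i j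
  proof (rule ccontr)
    assume "\<not> rank j < rank i"
    have ij: "i \<in> {1..chi}" "j \<in> {1..chi}"
      using arc assms(3) by auto
    obtain x y where xy: "x \<in> {i} \<times> {0..<m}" "y \<in> {i} \<times> {0..<m}" "x \<noteq> y"
      "f x div t = rank i" "f y div t = rank i"
      using rank ij(1) by blast
    obtain z where z: "z \<in> {j} \<times> {0..<m}" "f z div t = rank j"
      using rank ij(2) by blast
    have "{x, y, z} \<in> snd (HT T chi m)"
      unfolding HT_def snd_conv using arc ij xy(1-3) z(1) by blast
    moreover have "f x \<noteq> f y"
      using inj xy(1-3) ij(1) unfolding inj_on_def by blast
    then have "block_colouring t (f ` {x, y, z})"
      unfolding block_colouring_def min_twice_on_def
      using xy(4,5) z(2) \<open>\<not> rank j < rank i\<close> by auto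
    ultimately show False
      using blue by blast
  qed
  then show ?thesis
    by (rule acyclic_if_rank_decreasing)
qed

theorem proposition1p13:
  fixes chi m n t :: nat and T :: "(nat \<times> nat) set"
  assumes "chi \<ge> 3" and "m \<ge> 2"
    and "tournament chi T" and "\<not> transitive_tournament chi T"
    and "n \<ge> 1" and "t \<ge> 1" and "(3 * t) div 2 + 1 < n"
  shows "ramsey3 (tight_path n) (HT T chi m) \<ge> (m - 1) * t + 1"
proof -
  have "0 < t" "1 \<le> m"
    using assms(2,6) by simp_all
  have T: "T \<subseteq> {1..chi} \<times> {1..chi}" "irrefl_on {1..chi} T"
    using assms(3) unfolding tournament_def irrefl_on_def by auto
  have "\<not> red_copy (block_colouring t) ((m - 1) * t) (tight_path n)"
    using no_red_tight_path \<open>0 < t\<close> assms(7) by blast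
  moreover have "\<not> blue_copy (block_colouring t) ((m - 1) * t) (HT T chi m)"
    using blue_HT_copy_imp_acyclic[OF \<open>0 < t\<close> \<open>1 \<le> m\<close> T(1)] assms(3,4)
    unfolding transitive_tournament_def by auto
  ultimately have "(m - 1) * t < ramsey3 (tight_path n) (HT T chi m)"
    using ramsey3_lower_bound uniform_hgraph_tight_path uniform_hgraph_HT[OF T(2)] by blast
  then show ?thesis
    by simp
qed

end
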